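(* Let $d\ge 2$ be an integer, let $\mu\in\mathbb{R}$ and $\sigma>0$, and let ${\bm{x}}=(x_1,\dots,x_d)\in\mathbb{R}^{d}$ be a random vector whose entries are drawn i.i.d. from $\mathcal{N}(\mu,\sigma^{2})$. For an integer $k$ with $1\le k\le d-1$, define $$\theta({\bm{x}},k)=\mathrm{mean}({\bm{x}})+\mathrm{std}({\bm{x}})\cdot Q\!\left(1-\tfrac{k}{d}\right),$$ where $\mathrm{mean}({\bm{x}})=\frac1d\sum_{i=1}^d x_i$, $\mathrm{std}({\bm{x}})=\sqrt{\frac{1}{d-1}\sum_{i=1}^d (x_i-\mathrm{mean}({\bm{x}}))^2}$, and $Q$ is the quantile function (inverse of the cumulative distribution function) of the standard Gaussian distribution. Take any $\delta\in(0,1)$ and assume $d\ge\max\{2,\log\frac{6}{\delta}\}$. Then with probability at least $1-\delta$, $$\frac{\left|\,\#\{i\in\{1,\dots,d\} : x_i>\theta({\bm{x}},k)\}-k\,\right|}{d}\le 4\sqrt{\frac{\log\frac{6}{\delta}}{d}}\left(1+\sqrt{-2\log\min\left\{\frac{k}{d},\,1-\frac{k}{d}\right\}}\right).$$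
   Context: $\log$ denotes the natural logarithm and $\#$ denotes the cardinality of a finite set. *)

theory Defs
  imports "HOL-Probability.Probability"
begin

definition gauss_measure :: "real \<Rightarrow> real \<Rightarrow> real measure" where
  "gauss_measure \<mu> \<sigma> = density lborel (normal_density \<mu> \<sigma>)"

definition std_gauss_quantile :: "real \<Rightarrow> real" where
  "std_gauss_quantile p = (THE t. cdf (gauss_measure 0 1) t = p)"

definition vec_mean :: "nat \<Rightarrow> (nat \<Rightarrow> real) \<Rightarrow> real" where
  "vec_mean d x = (\<Sum>i=1..d. x i) / real d"

definition vec_std :: "nat \<Rightarrow> (nat \<Rightarrow> real) \<Rightarrow> real" where
  "vec_std d x = sqrt ((\<Sum>i=1..d. (x i - vec_mean d x)\<^sup>2) / (real d - 1))"

definition theta :: "nat \<Rightarrow> (nat \<Rightarrow> real) \<Rightarrow> nat \<Rightarrow> real" where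
  "theta d x k = vec_mean d x + vec_std d x * std_gauss_quantile (1 - real k / real d)"

end

theory Submission
  imports Defs
begin

text \<open>
  The standardized sample \<open>z\<^sub>i = (x\<^sub>i - \<mu>) / \<sigma>\<close> is i.i.d. standard Gaussian, and the
  threshold is affine equivariant, so only \<open>z\<close> matters. Let \<open>r = sqrt (log (6 / \<delta>) / d)\<close>,
  \<open>q = Q (1 - k / d)\<close> and \<open>\<epsilon> = sqrt 2 r + 8 r |q|\<close>. Chernoff bounds, from the moment generating
  functions of \<open>z\<close> and \<open>z\<^sup>2\<close> and from Hoeffding's lemma for indicators, bound six one-sided
  deviation events by \<open>exp (- d r\<^sup>2) = \<delta> / 6\<close> each. Outside them the sample mean of \<open>z\<close> is
  below \<open>sqrt 2 r\<close> in absolute value, its second moment lies in \<open>(1 - 3 r, 1 + 5 r)\<close>, and the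
  empirical frequencies of \<open>z\<^sub>i > q - \<epsilon>\<close> and \<open>z\<^sub>i \<le> q + \<epsilon>\<close> exceed the Gaussian
  probabilities by less than \<open>r / sqrt 2\<close>. Then the sample standard deviation is within \<open>8 r\<close>
  of 1, so the standardized threshold is within \<open>\<epsilon>\<close> of \<open>q\<close>, and as the Gaussian tail function
  is \<open>1/2\<close>-Lipschitz the count differs from \<open>d P(Z > q) = k\<close> by at most
  \<open>d (\<epsilon> / 2 + r / sqrt 2) \<le> 4 d r (1 + |q|)\<close>. Finally \<open>|q| \<le> sqrt (- 2 log (min (k / d) (1 - k / d)))\<close>
  by the tail bound \<open>P(Z \<ge> t) \<le> exp (- t\<^sup>2 / 2)\<close>.
\<close>

section \<open>The Gaussian measure\<close>

lemma prob_space_gauss_measure: "0 < s \<Longrightarrow> prob_space (gauss_measure m s)"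
  unfolding gauss_measure_def by (rule prob_space_normal_density)

lemma sets_gauss_measure [simp, measurable_cong]: "sets (gauss_measure m s) = sets borel"
  unfolding gauss_measure_def by simp

lemma space_gauss_measure [simp]: "space (gauss_measure m s) = UNIV"
  unfolding gauss_measure_def by simp

lemma nn_integral_gauss_measure:
  assumes [measurable]: "g \<in> borel_measurable borel"
  shows "(\<integral>\<^sup>+x. g x \<partial>gauss_measure m s) = (\<integral>\<^sup>+x. ennreal (normal_density m s x) * g x \<partial>lborel)"
  unfolding gauss_measure_def by (subst nn_integral_density) auto

lemma nn_integral_normal_density: "0 < s \<Longrightarrow> (\<integral>\<^sup>+x. ennreal (normal_density m s x) \<partial>lborel) = 1"
  using prob_space.emeasure_space_1[OF prob_space_gauss_measure[of s m]]
  by (simp add: gauss_measure_def emeasure_density)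

abbreviation std_gauss :: "real measure" where
  "std_gauss \<equiv> gauss_measure 0 1"

interpretation std_gauss: real_distribution std_gauss
  by (simp add: real_distribution_def real_distribution_axioms_def prob_space_gauss_measure)

lemma nn_integral_gauss_measure_affine:
  assumes [measurable]: "g \<in> borel_measurable borel" and s: "0 < s"
  shows "(\<integral>\<^sup>+x. g x \<partial>gauss_measure m s) = (\<integral>\<^sup>+y. g (m + s * y) \<partial>std_gauss)"
proof -
  have density: "s * normal_density m s (m + s * y) = normal_density 0 1 y" for y
    using s unfolding normal_density_def by (simp add: power_mult_distrib real_sqrt_mult field_simps)
  have "(\<integral>\<^sup>+x. g x \<partial>gauss_measure m s) = (\<integral>\<^sup>+x. ennreal (normal_density m s x) * g x \<partial>lborel)"
    by (rule nn_integral_gauss_measure) simp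
  also have "\<dots> = (\<integral>\<^sup>+y. ennreal s * (ennreal (normal_density m s (m + s * y)) * g (m + s * y)) \<partial>lborel)"
    using s by (subst nn_integral_real_affine[where t = m and c = s]) (auto simp: nn_integral_cmult)
  also have "\<dots> = (\<integral>\<^sup>+y. ennreal (normal_density 0 1 y) * g (m + s * y) \<partial>lborel)"
    using s by (intro nn_integral_cong) (simp add: mult.assoc[symmetric] density flip: ennreal_mult')
  also have "\<dots> = (\<integral>\<^sup>+y. g (m + s * y) \<partial>std_gauss)"
    by (rule nn_integral_gauss_measure[symmetric]) simp
  finally show ?thesis .
qed

corollary nn_integral_gauss_measure_standardize:
  assumes "f \<in> borel_measurable borel" and "0 < s"
  shows "(\<integral>\<^sup>+x. f ((x - m) / s) \<partial>gauss_measure m s) = (\<integral>\<^sup>+y. f y \<partial>std_gauss)"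
  using assms by (subst nn_integral_gauss_measure_affine) auto

lemma nn_integral_exp_linear_std_gauss:
  "(\<integral>\<^sup>+y. ennreal (exp (l * y)) \<partial>std_gauss) = ennreal (exp (l\<^sup>2 / 2))"
proof -
  have "normal_density 0 1 y * exp (l * y) = exp (l\<^sup>2 / 2) * normal_density l 1 y" for y
    unfolding normal_density_def by (simp add: mult_exp_exp power2_eq_square field_simps)
  then have "(\<integral>\<^sup>+y. ennreal (exp (l * y)) \<partial>std_gauss)
      = (\<integral>\<^sup>+y. ennreal (exp (l\<^sup>2 / 2)) * ennreal (normal_density l 1 y) \<partial>lborel)"
    by (subst nn_integral_gauss_measure) (auto simp flip: ennreal_mult' intro!: nn_integral_cong)
  also have "\<dots> = ennreal (exp (l\<^sup>2 / 2))"
    by (simp add: nn_integral_cmult nn_integral_normal_density)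
  finally show ?thesis .
qed

lemma nn_integral_exp_square_std_gauss:
  assumes "l < 1/2"
  shows "(\<integral>\<^sup>+y. ennreal (exp (l * y\<^sup>2)) \<partial>std_gauss) = ennreal (1 / sqrt (1 - 2 * l))"
proof -
  define t where "t = 1 / sqrt (1 - 2 * l)"
  have t: "t > 0" "t\<^sup>2 * (1 - 2 * l) = 1"
    using assms by (auto simp: t_def power_divide)
  have "normal_density 0 1 y * exp (l * y\<^sup>2) = t * normal_density 0 t y" for y
  proof -
    have "- y\<^sup>2 / (2 * t\<^sup>2) = - (y\<^sup>2 / 2) * (1 / t\<^sup>2)"
      by simp
    also have "1 / t\<^sup>2 = 1 - 2 * l"
      using t by (simp add: field_simps)
    also have "- (y\<^sup>2 / 2) * (1 - 2 * l) = - y\<^sup>2 / 2 + l * y\<^sup>2"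
      by (simp add: field_simps)
    finally have exponent: "exp (- y\<^sup>2 / (2 * t\<^sup>2)) = exp (- y\<^sup>2 / 2) * exp (l * y\<^sup>2)"
      by (simp add: mult_exp_exp)
    have "t * normal_density 0 t y = t / sqrt (2 * pi * t\<^sup>2) * exp (- y\<^sup>2 / (2 * t\<^sup>2))"
      unfolding normal_density_def by simp
    also have "t / sqrt (2 * pi * t\<^sup>2) = 1 / sqrt (2 * pi)"
      using t(1) by (simp add: real_sqrt_mult)
    finally show ?thesis
      unfolding exponent std_normal_density_def by simp
  qed
  then have "(\<integral>\<^sup>+y. ennreal (exp (l * y\<^sup>2)) \<partial>std_gauss)
      = (\<integral>\<^sup>+y. ennreal t * ennreal (normal_density 0 t y) \<partial>lborel)"
    using t by (subst nn_integral_gauss_measure) (auto simp flip: ennreal_mult' intro!: nn_integral_cong)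
  also have "\<dots> = ennreal t"
    using t by (simp add: nn_integral_cmult nn_integral_normal_density)
  finally show ?thesis unfolding t_def .
qed

section \<open>Tail function and quantile of the standard Gaussian\<close>

lemma std_normal_density_le_half: "std_normal_density x \<le> 1/2"
proof -
  have "2 \<le> sqrt (2 * pi)"
    using pi_gt3 by (simp add: real_le_rsqrt)
  then have "1 / sqrt (2 * pi) * exp (- x\<^sup>2 / 2) \<le> 1/2 * 1"
    by (intro mult_mono) (auto simp: field_simps)
  then show ?thesis
    unfolding std_normal_density_def by simp
qed

lemma emeasure_std_gauss_le_lborel:
  assumes [measurable]: "A \<in> sets borel"
  shows "emeasure std_gauss A \<le> ennreal (1/2) * emeasure lborel A"
proof -
  have "emeasure std_gauss A = (\<integral>\<^sup>+x. ennreal (std_normal_density x) * indicator A x \<partial>lborel)"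
    by (simp add: gauss_measure_def emeasure_density mult.commute)
  also have "\<dots> \<le> (\<integral>\<^sup>+x. ennreal (1/2) * indicator A x \<partial>lborel)"
    by (intro nn_integral_mono mult_right_mono ennreal_leI std_normal_density_le_half) simp
  also have "\<dots> = ennreal (1/2) * emeasure lborel A"
    by (simp add: nn_integral_cmult_indicator)
  finally show ?thesis .
qed

lemma measure_std_gauss_Ioc_le:
  assumes "u \<le> v"
  shows "measure std_gauss {u<..v} \<le> (v - u) / 2"
proof -
  have "emeasure std_gauss {u<..v} \<le> ennreal ((v - u) / 2)"
    using emeasure_std_gauss_le_lborel[of "{u<..v}"] ennreal_mult[of "1/2" "v - u"] assms by simp
  then show ?thesis
    using assms by (simp add: std_gauss.emeasure_eq_measure ennreal_le_iff)
qed

lemma measure_std_gauss_Ioc_pos: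
  assumes "u < v"
  shows "0 < measure std_gauss {u<..v}"
proof -
  define c where "c = std_normal_density (max \<bar>u\<bar> \<bar>v\<bar>)"
  have c: "0 < c"
    by (simp add: c_def normal_density_pos)
  have le: "c \<le> std_normal_density x" if "x \<in> {u<..v}" for x
  proof -
    have "x\<^sup>2 \<le> (max \<bar>u\<bar> \<bar>v\<bar>)\<^sup>2"
      using that by (subst abs_le_square_iff[symmetric]) auto
    then show ?thesis
      unfolding c_def std_normal_density_def by (simp add: divide_right_mono)
  qed
  have "ennreal (c * (v - u)) = (\<integral>\<^sup>+x. ennreal c * indicator {u<..v} x \<partial>lborel)"
    using assms c by (simp add: nn_integral_cmult_indicator ennreal_mult')
  also have "\<dots> \<le> (\<integral>\<^sup>+x. ennreal (std_normal_density x) * indicator {u<..v} x \<partial>lborel)"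
    by (intro nn_integral_mono) (auto simp: le split: split_indicator)
  also have "\<dots> = emeasure std_gauss {u<..v}"
    by (simp add: gauss_measure_def emeasure_density mult.commute)
  finally have "c * (v - u) \<le> measure std_gauss {u<..v}"
    using measure_nonneg[of std_gauss "{u<..v}"]
    by (auto simp: std_gauss.emeasure_eq_measure ennreal_le_iff2)
  moreover have "0 < c * (v - u)"
    using c assms by simp
  ultimately show ?thesis
    by linarith
qed

definition gauss_tail :: "real \<Rightarrow> real" where
  "gauss_tail t = measure std_gauss {t<..}"

lemma cdf_std_gauss: "cdf std_gauss t = 1 - gauss_tail t"
proof -
  have "{t<..} = space std_gauss - {..t}"
    by auto
  then have "gauss_tail t = 1 - measure std_gauss {..t}"
    unfolding gauss_tail_def by (simp only: std_gauss.prob_compl[of "{..t}"] atMost_borel std_gauss.sets_M)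
  then show ?thesis
    by (simp add: cdf_def)
qed

lemma gauss_tail_diff:
  assumes "u \<le> v"
  shows "gauss_tail u - gauss_tail v = measure std_gauss {u<..v}"
proof (cases "u = v")
  case False
  then have "cdf std_gauss v - cdf std_gauss u = measure std_gauss {u<..v}"
    using assms by (intro std_gauss.cdf_diff_eq) simp
  then show ?thesis
    by (simp add: cdf_std_gauss)
qed simp

lemma gauss_tail_diff_le: "u \<le> v \<Longrightarrow> gauss_tail u - gauss_tail v \<le> (v - u) / 2"
  using measure_std_gauss_Ioc_le[of u v] by (simp add: gauss_tail_diff)

lemma strict_mono_cdf_std_gauss: "strict_mono (cdf std_gauss)"
proof (rule strict_monoI)
  fix u v :: real
  assume "u < v"
  then have "0 < gauss_tail u - gauss_tail v"
    by (simp add: gauss_tail_diff measure_std_gauss_Ioc_pos)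
  then show "cdf std_gauss u < cdf std_gauss v"
    by (simp add: cdf_std_gauss)
qed

lemma isCont_cdf_std_gauss: "isCont (cdf std_gauss) t"
proof -
  have "emeasure std_gauss {t} = 0"
    using emeasure_std_gauss_le_lborel[of "{t}"] by simp
  then show ?thesis
    by (simp add: std_gauss.isCont_cdf measure_def)
qed

lemma cdf_std_gauss_std_gauss_quantile:
  assumes "0 < p" "p < 1"
  shows "cdf std_gauss (std_gauss_quantile p) = p"
proof -
  have "eventually (\<lambda>x. cdf std_gauss x < p) at_bot"
    by (rule order_tendstoD(2)[OF std_gauss.cdf_lim_at_bot assms(1)])
  then obtain a where a: "cdf std_gauss a < p"
    by (auto simp: eventually_at_bot_linorder)
  have "eventually (\<lambda>x. p < cdf std_gauss x) at_top"
    by (rule order_tendstoD(1)[OF std_gauss.cdf_lim_at_top_prob assms(2)])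
  then obtain b0 where b0: "\<And>x. b0 \<le> x \<Longrightarrow> p < cdf std_gauss x"
    by (auto simp: eventually_at_top_linorder)
  define b where "b = max a b0"
  have b: "p < cdf std_gauss b" "a \<le> b"
    using b0 by (auto simp: b_def)
  obtain t where t: "cdf std_gauss t = p"
    using IVT[of "cdf std_gauss" a p b] a b isCont_cdf_std_gauss by (auto intro: less_imp_le)
  moreover have "std_gauss_quantile p = t"
    unfolding std_gauss_quantile_def
    by (rule the_equality) (use t strict_mono_eq[OF strict_mono_cdf_std_gauss] in auto)
  ultimately show ?thesis
    by simp
qed

lemma gauss_tail_std_gauss_quantile:
  "0 < p \<Longrightarrow> p < 1 \<Longrightarrow> gauss_tail (std_gauss_quantile (1 - p)) = p"
  using cdf_std_gauss_std_gauss_quantile[of "1 - p"] cdf_std_gauss by simp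

text \<open>For \<open>t > 0\<close> the set is \<open>[t, \<infinity>)\<close>, for \<open>t < 0\<close> it is \<open>(-\<infinity>, t]\<close>: one Chernoff bound covers both tails.\<close>

lemma measure_std_gauss_tail_le: "measure std_gauss {y. t\<^sup>2 \<le> t * y} \<le> exp (- t\<^sup>2 / 2)"
proof -
  have "emeasure std_gauss {y \<in> space std_gauss. t\<^sup>2 \<le> t * y}
      \<le> ennreal (exp (- t\<^sup>2)) * (\<integral>\<^sup>+y. ennreal (exp (t * y)) * indicator (space std_gauss) y \<partial>std_gauss)"
    using Chernoff_ineq_nn_integral_ge[of 1 "space std_gauss" std_gauss "\<lambda>y. t * y" "t\<^sup>2"] by simp
  also have "\<dots> = ennreal (exp (- t\<^sup>2 / 2))"
    by (simp add: nn_integral_exp_linear_std_gauss mult_exp_exp flip: ennreal_mult')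
  finally show ?thesis
    by (simp add: std_gauss.emeasure_eq_measure ennreal_le_iff)
qed

lemma abs_std_gauss_quantile_le:
  assumes "0 < p" "p < 1"
  shows "\<bar>std_gauss_quantile (1 - p)\<bar> \<le> sqrt (- 2 * ln (min p (1 - p)))"
proof -
  define q where "q = std_gauss_quantile (1 - p)"
  have "min p (1 - p) \<le> measure std_gauss {y. q\<^sup>2 \<le> q * y}"
  proof (cases "q \<ge> 0")
    case True
    then have "{q<..} \<subseteq> {y. q\<^sup>2 \<le> q * y}"
      by (auto simp: power2_eq_square intro: mult_left_mono)
    then have "gauss_tail q \<le> measure std_gauss {y. q\<^sup>2 \<le> q * y}"
      unfolding gauss_tail_def by (intro std_gauss.finite_measure_mono) auto
    then show ?thesis
      using gauss_tail_std_gauss_quantile[OF assms] by (simp add: q_def)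
  next
    case False
    then have "{..q} \<subseteq> {y. q\<^sup>2 \<le> q * y}"
      by (auto simp: power2_eq_square intro: mult_left_mono_neg)
    then have "cdf std_gauss q \<le> measure std_gauss {y. q\<^sup>2 \<le> q * y}"
      unfolding cdf_def by (intro std_gauss.finite_measure_mono) auto
    then show ?thesis
      using cdf_std_gauss_std_gauss_quantile[of "1 - p"] assms by (simp add: q_def)
  qed
  also have "\<dots> \<le> exp (- q\<^sup>2 / 2)"
    by (rule measure_std_gauss_tail_le)
  finally have "ln (min p (1 - p)) \<le> ln (exp (- q\<^sup>2 / 2))"
    using assms by (subst ln_le_cancel_iff) auto
  then have "q\<^sup>2 \<le> - 2 * ln (min p (1 - p))"
    by simp
  then show ?thesis
    unfolding q_def by (metis real_sqrt_abs real_sqrt_le_mono)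
qed

section \<open>Chernoff bounds for i.i.d. samples\<close>

text \<open>An exponential moment certifying \<open>P(g \<ge> c) \<le> exp (- \<rho>)\<close>; unlike the probability bound
  itself, it tensorizes over i.i.d. samples.\<close>

definition chernoff_bounded :: "'a measure \<Rightarrow> ('a \<Rightarrow> real) \<Rightarrow> real \<Rightarrow> real \<Rightarrow> bool" where
  "chernoff_bounded G g c \<rho> \<longleftrightarrow> g \<in> borel_measurable G \<and>
     (\<exists>h\<ge>0. (\<integral>\<^sup>+y. ennreal (exp (h * (g y - c))) \<partial>G) \<le> ennreal (exp (- \<rho>)))"

lemma chernoff_boundedI:
  "g \<in> borel_measurable G \<Longrightarrow> 0 \<le> h \<Longrightarrow> (\<integral>\<^sup>+y. ennreal (exp (h * (g y - c))) \<partial>G) \<le> ennreal (exp (- \<rho>))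
    \<Longrightarrow> chernoff_bounded G g c \<rho>"
  unfolding chernoff_bounded_def by blast

lemma chernoff_bounded_gauss_standardize:
  assumes "chernoff_bounded std_gauss g c \<rho>" and "0 < \<sigma>"
  shows "chernoff_bounded (gauss_measure \<mu> \<sigma>) (\<lambda>x. g ((x - \<mu>) / \<sigma>)) c \<rho>"
  using assms unfolding chernoff_bounded_def
  by (auto simp: nn_integral_gauss_measure_standardize[where f = "\<lambda>y. ennreal (exp (_ * (g y - c)))"])

lemma measure_PiM_sum_ge_le:
  fixes G :: "'a measure"
  assumes G: "prob_space G" and I: "finite I" and chernoff: "chernoff_bounded G g c \<rho>"
  shows "measure (PiM I (\<lambda>_. G)) {x \<in> space (PiM I (\<lambda>_. G)). real (card I) * c \<le> (\<Sum>i\<in>I. g (x i))}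
           \<le> exp (- real (card I) * \<rho>)"
proof -
  let ?M = "PiM I (\<lambda>_. G)"
  let ?S = "{x \<in> space ?M. real (card I) * c \<le> (\<Sum>i\<in>I. g (x i))}"
  obtain h where h: "0 \<le> h" and mgf: "(\<integral>\<^sup>+y. ennreal (exp (h * (g y - c))) \<partial>G) \<le> ennreal (exp (- \<rho>))"
    using chernoff unfolding chernoff_bounded_def by blast
  have [measurable]: "g \<in> borel_measurable G"
    using chernoff unfolding chernoff_bounded_def by blast
  interpret product_sigma_finite "\<lambda>_. G"
    unfolding product_sigma_finite_def using G prob_space_imp_sigma_finite by blast
  interpret M: prob_space ?M
    using G by (intro prob_space_PiM) auto
  have markov: "indicator ?S x \<le> (\<Prod>i\<in>I. ennreal (exp (h * (g (x i) - c))))" for x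
  proof (cases "x \<in> ?S")
    case True
    have "1 \<le> exp (h * ((\<Sum>i\<in>I. g (x i)) - real (card I) * c))"
      using True h by simp
    also have "\<dots> = exp (\<Sum>i\<in>I. h * (g (x i) - c))"
      by (simp add: sum_distrib_left[symmetric] sum_subtractf)
    also have "\<dots> = (\<Prod>i\<in>I. exp (h * (g (x i) - c)))"
      by (simp add: exp_sum I)
    finally show ?thesis
      using True by (simp add: prod_ennreal)
  qed simp
  have "?S \<in> sets ?M"
    by measurable
  then have "emeasure ?M ?S = (\<integral>\<^sup>+x. indicator ?S x \<partial>?M)"
    by simp
  also have "\<dots> \<le> (\<integral>\<^sup>+x. (\<Prod>i\<in>I. ennreal (exp (h * (g (x i) - c)))) \<partial>?M)"
    by (intro nn_integral_mono markov)
  also have "\<dots> = (\<integral>\<^sup>+y. ennreal (exp (h * (g y - c))) \<partial>G) ^ card I"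
    by (subst product_nn_integral_prod) (auto simp: I)
  also have "\<dots> \<le> ennreal (exp (- \<rho>)) ^ card I"
    by (intro power_mono mgf) simp
  also have "\<dots> = ennreal (exp (- real (card I) * \<rho>))"
    by (simp add: ennreal_power exp_of_nat_mult[symmetric])
  finally show ?thesis
    by (simp add: M.emeasure_eq_measure ennreal_le_iff)
qed

lemma measure_PiM_all_sums_less:
  fixes G :: "'a measure" and J :: "(('a \<Rightarrow> real) \<times> real) set"
  assumes G: "prob_space G" and I: "finite I" and J: "finite J"
    and chernoff: "\<And>g c. (g, c) \<in> J \<Longrightarrow> chernoff_bounded G g c \<rho>"
  shows "1 - real (card J) * exp (- real (card I) * \<rho>)
           \<le> measure (PiM I (\<lambda>_. G))
               {x \<in> space (PiM I (\<lambda>_. G)). \<forall>(g, c)\<in>J. (\<Sum>i\<in>I. g (x i)) < real (card I) * c}"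
proof -
  let ?M = "PiM I (\<lambda>_. G)"
  define bad where "bad = (\<lambda>(g, c). {x \<in> space ?M. real (card I) * c \<le> (\<Sum>i\<in>I. g (x i))})"
  interpret M: prob_space ?M
    using G by (intro prob_space_PiM) auto
  have bad_sets: "bad j \<in> sets ?M" if "j \<in> J" for j
  proof -
    have [measurable]: "fst j \<in> borel_measurable G"
      using chernoff[of "fst j" "snd j"] that by (simp add: chernoff_bounded_def)
    show ?thesis
      unfolding bad_def case_prod_beta by measurable
  qed
  have "measure ?M (\<Union>j\<in>J. bad j) \<le> (\<Sum>j\<in>J. measure ?M (bad j))"
    using J bad_sets by (rule measure_UNION_le)
  also have "\<dots> \<le> (\<Sum>j\<in>J. exp (- real (card I) * \<rho>))"
    using chernoff measure_PiM_sum_ge_le[OF G I] by (intro sum_mono) (auto simp: bad_def)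
  finally have "1 - real (card J) * exp (- real (card I) * \<rho>) \<le> measure ?M (space ?M - (\<Union>j\<in>J. bad j))"
    using J bad_sets by (subst M.prob_compl) auto
  also have "space ?M - (\<Union>j\<in>J. bad j) = {x \<in> space ?M. \<forall>(g, c)\<in>J. (\<Sum>i\<in>I. g (x i)) < real (card I) * c}"
    by (auto simp: bad_def not_le)
  finally show ?thesis .
qed

lemma measure_gauss_sample_all_sums_less:
  fixes J :: "((real \<Rightarrow> real) \<times> real) set" and \<mu> \<sigma> \<rho> :: real
  assumes \<sigma>: "0 < \<sigma>" and I: "finite I" and J: "finite J"
    and chernoff: "\<And>g c. (g, c) \<in> J \<Longrightarrow> chernoff_bounded std_gauss g c \<rho>"
  defines "M \<equiv> PiM I (\<lambda>_. gauss_measure \<mu> \<sigma>)"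
  shows "1 - real (card J) * exp (- real (card I) * \<rho>)
           \<le> measure M {x \<in> space M. \<forall>(g, c)\<in>J. (\<Sum>i\<in>I. g ((x i - \<mu>) / \<sigma>)) < real (card I) * c}"
proof -
  define J' where "J' = (\<lambda>(g, c). (\<lambda>y. g ((y - \<mu>) / \<sigma>), c)) ` J"
  have "card J' \<le> card J"
    unfolding J'_def by (rule card_image_le[OF J])
  then have "1 - real (card J) * exp (- real (card I) * \<rho>) \<le> 1 - real (card J') * exp (- real (card I) * \<rho>)"
    by (simp add: mult_right_mono)
  also have "\<dots> \<le> measure M {x \<in> space M. \<forall>(g, c)\<in>J'. (\<Sum>i\<in>I. g (x i)) < real (card I) * c}"
    unfolding M_def J'_def
    using J chernoff chernoff_bounded_gauss_standardize[OF _ \<sigma>]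
    by (intro measure_PiM_all_sums_less[OF prob_space_gauss_measure[OF \<sigma>] I]) auto
  also have "{x \<in> space M. \<forall>(g, c)\<in>J'. (\<Sum>i\<in>I. g (x i)) < real (card I) * c}
      = {x \<in> space M. \<forall>(g, c)\<in>J. (\<Sum>i\<in>I. g ((x i - \<mu>) / \<sigma>)) < real (card I) * c}"
    unfolding J'_def by auto
  finally show ?thesis .
qed

section \<open>Exponential moments of the deviations\<close>

lemma nn_integral_exp_linear_deviation_std_gauss:
  assumes "s\<^sup>2 = 1"
  shows "(\<integral>\<^sup>+y. ennreal (exp (a * (s * y - a))) \<partial>std_gauss) = ennreal (exp (- a\<^sup>2 / 2))"
proof -
  have "(\<integral>\<^sup>+y. ennreal (exp (a * (s * y - a))) \<partial>std_gauss)
      = (\<integral>\<^sup>+y. ennreal (exp (- a\<^sup>2)) * ennreal (exp ((a * s) * y)) \<partial>std_gauss)"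
    by (intro nn_integral_cong) (simp add: mult_exp_exp algebra_simps power2_eq_square flip: ennreal_mult')
  also have "\<dots> = ennreal (exp (- a\<^sup>2)) * ennreal (exp ((a * s)\<^sup>2 / 2))"
    by (simp add: nn_integral_cmult nn_integral_exp_linear_std_gauss)
  also have "\<dots> = ennreal (exp (- a\<^sup>2 / 2))"
    using assms by (simp add: power_mult_distrib mult_exp_exp flip: ennreal_mult')
  finally show ?thesis .
qed

lemma exp_half_le_sqrt:
  assumes "exp w \<le> u"
  shows "exp (w / 2) \<le> sqrt u"
proof -
  have "exp w = (exp (w / 2))\<^sup>2"
    by (simp add: power2_eq_square flip: exp_add)
  then show ?thesis
    using assms by (metis exp_ge_zero real_sqrt_le_mono real_sqrt_unique)
qed

text \<open>The constants \<open>5\<close> and \<open>3\<close> are what the second order bounds on \<open>ln (1 \<mp> x)\<close> need to reach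
  the rate \<open>r\<^sup>2\<close> with \<open>h = r / 4\<close> and \<open>h = r / 2\<close>.\<close>

lemma nn_integral_exp_square_upper_std_gauss:
  assumes r: "0 < r" "r \<le> 1"
  shows "(\<integral>\<^sup>+y. ennreal (exp (r / 4 * (y\<^sup>2 - (1 + 5 * r)))) \<partial>std_gauss) \<le> ennreal (exp (- r\<^sup>2))"
proof -
  define h where "h = r / 4"
  have h: "0 < h" "2 * h \<le> 1/2"
    using r by (auto simp: h_def)
  have "(\<integral>\<^sup>+y. ennreal (exp (h * (y\<^sup>2 - (1 + 5 * r)))) \<partial>std_gauss)
      = (\<integral>\<^sup>+y. ennreal (exp (- h * (1 + 5 * r))) * ennreal (exp (h * y\<^sup>2)) \<partial>std_gauss)"
    by (intro nn_integral_cong) (simp add: mult_exp_exp algebra_simps flip: ennreal_mult')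
  also have "\<dots> = ennreal (exp (- h * (1 + 5 * r))) * ennreal (1 / sqrt (1 - 2 * h))"
    using h by (subst nn_integral_cmult) (auto simp: nn_integral_exp_square_std_gauss)
  also have "\<dots> = ennreal (exp (- h * (1 + 5 * r)) / sqrt (1 - 2 * h))"
    by (simp flip: ennreal_mult')
  also have "\<dots> \<le> ennreal (exp (- r\<^sup>2))"
  proof (rule ennreal_leI)
    have "exp (- 2 * h - 2 * (2 * h)\<^sup>2) \<le> 1 - 2 * h"
      using ln_one_minus_pos_lower_bound[of "2 * h"] h by (subst ln_ge_iff[symmetric]) auto
    moreover have "(- 2 * h - 2 * (2 * h)\<^sup>2) / 2 = - h - 4 * h\<^sup>2"
      by (simp add: power2_eq_square)
    ultimately have "exp (- h - 4 * h\<^sup>2) \<le> sqrt (1 - 2 * h)"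
      by (metis exp_half_le_sqrt)
    moreover have "exp (- h * (1 + 5 * r)) = exp (- r\<^sup>2) * exp (- h - 4 * h\<^sup>2)"
      by (simp add: mult_exp_exp h_def power2_eq_square algebra_simps)
    ultimately show "exp (- h * (1 + 5 * r)) / sqrt (1 - 2 * h) \<le> exp (- r\<^sup>2)"
      using h by (simp add: divide_le_eq mult_left_mono)
  qed
  finally show ?thesis
    unfolding h_def .
qed

lemma nn_integral_exp_square_lower_std_gauss:
  assumes r: "0 < r" "r \<le> 1"
  shows "(\<integral>\<^sup>+y. ennreal (exp (r / 2 * (1 - 3 * r - y\<^sup>2))) \<partial>std_gauss) \<le> ennreal (exp (- r\<^sup>2))"
proof -
  define h where "h = r / 2"
  have h: "0 < h" "2 * h \<le> 1"
    using r by (auto simp: h_def)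
  have "(\<integral>\<^sup>+y. ennreal (exp (h * (1 - 3 * r - y\<^sup>2))) \<partial>std_gauss)
      = (\<integral>\<^sup>+y. ennreal (exp (h * (1 - 3 * r))) * ennreal (exp ((- h) * y\<^sup>2)) \<partial>std_gauss)"
    by (intro nn_integral_cong) (simp add: mult_exp_exp algebra_simps flip: ennreal_mult')
  also have "\<dots> = ennreal (exp (h * (1 - 3 * r))) * ennreal (1 / sqrt (1 + 2 * h))"
    using h by (subst nn_integral_cmult) (auto simp: nn_integral_exp_square_std_gauss[of "- h", simplified])
  also have "\<dots> = ennreal (exp (h * (1 - 3 * r)) / sqrt (1 + 2 * h))"
    by (simp flip: ennreal_mult')
  also have "\<dots> \<le> ennreal (exp (- r\<^sup>2))"
  proof (rule ennreal_leI)
    have "exp (2 * h - (2 * h)\<^sup>2) \<le> 1 + 2 * h"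
      using ln_one_plus_pos_lower_bound[of "2 * h"] h by (subst ln_ge_iff[symmetric]) auto
    moreover have "(2 * h - (2 * h)\<^sup>2) / 2 = h - 2 * h\<^sup>2"
      by (simp add: power2_eq_square)
    ultimately have "exp (h - 2 * h\<^sup>2) \<le> sqrt (1 + 2 * h)"
      by (metis exp_half_le_sqrt)
    moreover have "exp (h * (1 - 3 * r)) = exp (- r\<^sup>2) * exp (h - 2 * h\<^sup>2)"
      by (simp add: mult_exp_exp h_def power2_eq_square algebra_simps)
    ultimately show "exp (h * (1 - 3 * r)) / sqrt (1 + 2 * h) \<le> exp (- r\<^sup>2)"
      using h by (simp add: divide_le_eq mult_left_mono)
  qed
  finally show ?thesis
    unfolding h_def .
qed

lemma nn_integral_exp_indicator_deviation:
  assumes G: "prob_space G" and A [measurable]: "A \<in> sets G" and b: "0 < b"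
  shows "(\<integral>\<^sup>+y. ennreal (exp (4 * b * (indicator A y - (measure G A + b)))) \<partial>G)
           \<le> ennreal (exp (- 2 * b\<^sup>2))"
proof -
  interpret prob_space G
    by (fact G)
  interpret interval_bounded_random_variable G "indicator A" 0 1
    by unfold_locales (auto intro!: AE_I2 split: split_indicator)
  have expectation: "expectation (indicator A) = measure G A"
    using A by (simp add: sets.Int_space_eq2)
  have shift: "exp (4 * b * (indicator A y - (measure G A + b)))
      = exp (- 4 * b\<^sup>2) * exp (4 * b * (indicator A y - expectation (indicator A)))" for y
    unfolding expectation by (simp add: mult_exp_exp algebra_simps power2_eq_square)
  have "(\<integral>\<^sup>+y. ennreal (exp (4 * b * (indicator A y - (measure G A + b)))) \<partial>G)
      = ennreal (exp (- 4 * b\<^sup>2)) * (\<integral>\<^sup>+y. ennreal (exp (4 * b * (indicator A y - expectation (indicator A)))) \<partial>G)"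
    unfolding shift by (subst nn_integral_cmult[symmetric]) (simp_all add: ennreal_mult')
  also have "\<dots> \<le> ennreal (exp (- 4 * b\<^sup>2)) * ennreal (exp ((4 * b)\<^sup>2 * (1 - 0)\<^sup>2 / 8))"
    using b by (intro mult_left_mono Hoeffdings_lemma_nn_integral) auto
  also have "\<dots> = ennreal (exp (- 2 * b\<^sup>2))"
    by (simp add: mult_exp_exp power2_eq_square flip: ennreal_mult')
  finally show ?thesis .
qed

section \<open>Sample mean and standard deviation\<close>

lemma vec_mean_affine: "0 < d \<Longrightarrow> vec_mean d (\<lambda>i. a + b * z i) = a + b * vec_mean d z"
  by (simp add: vec_mean_def sum.distrib sum_distrib_left[symmetric] field_simps)

lemma vec_std_affine: "0 < d \<Longrightarrow> vec_std d (\<lambda>i. a + b * z i) = \<bar>b\<bar> * vec_std d z"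
proof -
  assume d: "0 < d"
  have "(\<Sum>i=1..d. (a + b * z i - vec_mean d (\<lambda>i. a + b * z i))\<^sup>2) = b\<^sup>2 * (\<Sum>i=1..d. (z i - vec_mean d z)\<^sup>2)"
    using d by (simp add: vec_mean_affine sum_distrib_left power_mult_distrib[symmetric] algebra_simps)
  then show ?thesis
    unfolding vec_std_def by (metis real_sqrt_abs real_sqrt_mult times_divide_eq_right)
qed

lemma theta_affine: "0 < d \<Longrightarrow> 0 \<le> b \<Longrightarrow> theta d (\<lambda>i. a + b * z i) k = a + b * theta d z k"
  by (simp add: theta_def vec_mean_affine vec_std_affine algebra_simps)

lemma theta_less_standardize_iff:
  assumes "0 < d" and "0 < \<sigma>"
  shows "theta d x k < x i \<longleftrightarrow> theta d (\<lambda>j. (x j - \<mu>) / \<sigma>) k < (x i - \<mu>) / \<sigma>"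
proof -
  have "x = (\<lambda>j. \<mu> + \<sigma> * ((x j - \<mu>) / \<sigma>))"
    using assms by simp
  then have "theta d x k = \<mu> + \<sigma> * theta d (\<lambda>j. (x j - \<mu>) / \<sigma>) k"
    using assms by (metis theta_affine less_imp_le)
  then show ?thesis
    using assms by (simp add: pos_less_divide_eq algebra_simps)
qed

lemma sum_sq_dev_eq:
  assumes "0 < d"
  shows "(\<Sum>i=1..d. (z i - vec_mean d z)\<^sup>2) = (\<Sum>i=1..d. (z i)\<^sup>2) - real d * (vec_mean d z)\<^sup>2"
proof -
  have sum: "(\<Sum>i=1..d. z i) = real d * vec_mean d z"
    using assms by (simp add: vec_mean_def)
  have "(z i - vec_mean d z)\<^sup>2 = (z i)\<^sup>2 - 2 * vec_mean d z * z i + (vec_mean d z)\<^sup>2" for i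
    by (simp add: power2_diff)
  then have "(\<Sum>i=1..d. (z i - vec_mean d z)\<^sup>2)
      = (\<Sum>i=1..d. (z i)\<^sup>2) - 2 * vec_mean d z * (\<Sum>i=1..d. z i) + real d * (vec_mean d z)\<^sup>2"
    by (simp add: sum.distrib sum_subtractf sum_distrib_left)
  then show ?thesis
    unfolding sum by (simp add: power2_eq_square)
qed

text \<open>The hypothesis \<open>1 \<le> d r\<^sup>2\<close> absorbs the Bessel factor \<open>d / (d - 1)\<close> of the sample variance.\<close>

lemma abs_vec_std_minus_one_le:
  assumes d: "2 \<le> d" and r: "0 < r" "r \<le> 1" "1 \<le> real d * r\<^sup>2"
    and mean: "(vec_mean d z)\<^sup>2 \<le> 2 * r\<^sup>2"
    and lower: "real d * (1 - 3 * r) < (\<Sum>i=1..d. (z i)\<^sup>2)"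
    and upper: "(\<Sum>i=1..d. (z i)\<^sup>2) < real d * (1 + 5 * r)"
  shows "\<bar>vec_std d z - 1\<bar> \<le> 8 * r"
proof -
  define n where "n = real d"
  define S where "S = (\<Sum>i=1..d. (z i)\<^sup>2) - n * (vec_mean d z)\<^sup>2"
  have n: "2 \<le> n" "1 \<le> n * r\<^sup>2"
    using d r by (simp_all add: n_def)
  have std: "vec_std d z = sqrt (S / (n - 1))"
    using sum_sq_dev_eq[of d z] d by (simp add: vec_std_def S_def n_def)
  have "vec_std d z \<le> 1 + 8 * r"
  proof -
    have "0 \<le> n * (vec_mean d z)\<^sup>2"
      by (simp add: n_def)
    then have "S \<le> n * (1 + 5 * r)"
      using upper unfolding S_def n_def by linarith
    then have "S / (n - 1) \<le> n * (1 + 5 * r) / (n - 1)"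
      using n by (intro divide_right_mono) auto
    also have "\<dots> = (1 + 5 * r) * (1 + 1 / (n - 1))"
      using n by (simp add: field_simps)
    also have "\<dots> \<le> (1 + 5 * r) * (1 + 2 * r\<^sup>2)"
    proof -
      have "1 / (n - 1) \<le> 2 / n"
        using n by (simp add: divide_simps)
      also have "\<dots> \<le> 2 * r\<^sup>2"
        using n by (simp add: divide_simps mult.commute)
      finally show ?thesis
        using r by (intro mult_left_mono) auto
    qed
    also have "\<dots> \<le> (1 + 8 * r)\<^sup>2"
    proof -
      have "r * r\<^sup>2 \<le> r\<^sup>2"
        using r by (simp add: mult_le_cancel_right1)
      moreover have "(1 + 5 * r) * (1 + 2 * r\<^sup>2) = 1 + 5 * r + 2 * r\<^sup>2 + 10 * (r * r\<^sup>2)"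
        by (simp add: algebra_simps)
      moreover have "(1 + 8 * r)\<^sup>2 = 1 + 16 * r + 64 * r\<^sup>2"
        by (simp add: power2_eq_square algebra_simps)
      ultimately show ?thesis
        using r zero_le_power2[of r] by linarith
    qed
    finally show ?thesis
      unfolding std using r by (intro real_le_lsqrt) auto
  qed
  moreover have "1 - 8 * r \<le> vec_std d z"
  proof (cases "5 * r < 1")
    case True
    have "n * (vec_mean d z)\<^sup>2 \<le> n * (2 * r\<^sup>2)"
      using mean n by (intro mult_left_mono) auto
    moreover have "n * r\<^sup>2 \<le> n * r"
      using r n by (intro mult_left_mono) (auto simp: power2_eq_square)
    ultimately have "n * (1 - 5 * r) < S"
      using lower unfolding S_def n_def[symmetric] by (simp add: algebra_simps)
    moreover have "0 < n * (1 - 5 * r)"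
      using n True by (intro mult_pos_pos) auto
    ultimately have "1 - 5 * r < S / n" and "0 < S"
      using n by (simp_all add: pos_less_divide_eq mult.commute)
    moreover have "S / n \<le> S / (n - 1)"
      using n \<open>0 < S\<close> by (intro divide_left_mono) auto
    moreover have "(1 - 5 * r)\<^sup>2 \<le> 1 - 5 * r"
      using True r unfolding power2_eq_square by (intro mult_left_le_one_le) auto
    ultimately have "1 - 5 * r \<le> vec_std d z"
      unfolding std by (intro real_le_rsqrt) linarith
    then show ?thesis
      using r by linarith
  next
    case False
    have "0 \<le> vec_std d z"
      unfolding vec_std_def using d by (intro real_sqrt_ge_zero divide_nonneg_nonneg sum_nonneg) auto
    then show ?thesis
      using False by linarith
  qed
  ultimately show ?thesis
    by linarith
qed

section \<open>Counting the sample points above the threshold\<close>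

lemma card_greater_deviation_le:
  fixes z :: "'i \<Rightarrow> real"
  assumes I: "finite I" and t: "\<bar>t - q\<bar> \<le> \<epsilon>"
    and above: "real (card {i \<in> I. q - \<epsilon> < z i}) < real (card I) * (gauss_tail (q - \<epsilon>) + \<beta>)"
    and below: "real (card {i \<in> I. z i \<le> q + \<epsilon>}) < real (card I) * (1 - gauss_tail (q + \<epsilon>) + \<beta>)"
  shows "\<bar>real (card {i \<in> I. t < z i}) - real (card I) * gauss_tail q\<bar> \<le> real (card I) * (\<epsilon> / 2 + \<beta>)"
proof -
  define n where "n = real (card I)"
  define C where "C = real (card {i \<in> I. t < z i})"
  have "0 \<le> \<epsilon>"
    using t by linarith
  then have tail: "gauss_tail (q - \<epsilon>) \<le> gauss_tail q + \<epsilon> / 2" "gauss_tail q - \<epsilon> / 2 \<le> gauss_tail (q + \<epsilon>)"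
    using gauss_tail_diff_le[of "q - \<epsilon>" q] gauss_tail_diff_le[of q "q + \<epsilon>"] by simp_all
  have "C \<le> real (card {i \<in> I. q - \<epsilon> < z i})"
    unfolding C_def using I t by (intro of_nat_mono card_mono) auto
  also have "\<dots> \<le> n * (gauss_tail (q - \<epsilon>) + \<beta>)"
    using above by (simp add: n_def)
  also have "\<dots> \<le> n * (gauss_tail q + \<epsilon> / 2 + \<beta>)"
    using tail by (intro mult_left_mono) (auto simp: n_def)
  finally have upper: "C \<le> n * (gauss_tail q + \<epsilon> / 2 + \<beta>)" .
  have "{i \<in> I. z i \<le> t} = I - {i \<in> I. t < z i}"
    by auto
  then have "n - C = real (card {i \<in> I. z i \<le> t})"
    using I by (simp add: C_def n_def card_Diff_subset card_mono of_nat_diff)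
  also have "\<dots> \<le> real (card {i \<in> I. z i \<le> q + \<epsilon>})"
    using I t by (intro of_nat_mono card_mono) auto
  also have "\<dots> \<le> n * (1 - gauss_tail (q + \<epsilon>) + \<beta>)"
    using below by (simp add: n_def)
  also have "\<dots> \<le> n * (1 - (gauss_tail q - \<epsilon> / 2) + \<beta>)"
    using tail by (intro mult_left_mono) (auto simp: n_def)
  finally have lower: "n * (gauss_tail q - \<epsilon> / 2 - \<beta>) \<le> C"
    by (simp add: algebra_simps)
  show ?thesis
    using upper lower unfolding C_def[symmetric] n_def[symmetric] by (simp add: abs_le_iff algebra_simps)
qed

definition typical_sample :: "nat \<Rightarrow> real \<Rightarrow> real \<Rightarrow> real \<Rightarrow> (nat \<Rightarrow> real) \<Rightarrow> bool" where
  "typical_sample d r u v z \<longleftrightarrow>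
     \<bar>\<Sum>i=1..d. z i\<bar> < real d * (sqrt 2 * r) \<and>
     real d * (1 - 3 * r) < (\<Sum>i=1..d. (z i)\<^sup>2) \<and> (\<Sum>i=1..d. (z i)\<^sup>2) < real d * (1 + 5 * r) \<and>
     real (card {i \<in> {1..d}. u < z i}) < real d * (gauss_tail u + r / sqrt 2) \<and>
     real (card {i \<in> {1..d}. z i \<le> v}) < real d * (1 - gauss_tail v + r / sqrt 2)"

lemma typical_sample_card_greater_theta:
  assumes d: "2 \<le> d" and k: "0 < k" "k < d" and r: "0 < r" "r \<le> 1" "1 \<le> real d * r\<^sup>2"
  defines "q \<equiv> std_gauss_quantile (1 - real k / real d)"
  defines "\<epsilon> \<equiv> sqrt 2 * r + 8 * r * \<bar>q\<bar>"
  assumes typical: "typical_sample d r (q - \<epsilon>) (q + \<epsilon>) z"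
  shows "\<bar>real (card {i \<in> {1..d}. theta d z k < z i}) - real k\<bar> / real d \<le> 4 * r * (1 + \<bar>q\<bar>)"
proof -
  have n: "0 < real d"
    using d by simp
  have mean: "\<bar>vec_mean d z\<bar> \<le> sqrt 2 * r"
    using typical n by (simp add: typical_sample_def vec_mean_def pos_divide_le_eq mult.commute)
  then have "(vec_mean d z)\<^sup>2 \<le> (sqrt 2 * r)\<^sup>2"
    using r by (subst abs_le_square_iff[symmetric]) simp
  then have "(vec_mean d z)\<^sup>2 \<le> 2 * r\<^sup>2"
    by (simp add: power_mult_distrib)
  then have std: "\<bar>vec_std d z - 1\<bar> \<le> 8 * r"
    using typical by (intro abs_vec_std_minus_one_le[OF d r]) (auto simp: typical_sample_def)
  have "\<bar>(vec_std d z - 1) * q\<bar> \<le> 8 * r * \<bar>q\<bar>"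
    unfolding abs_mult by (intro mult_right_mono std) simp
  then have "\<bar>theta d z k - q\<bar> \<le> \<epsilon>"
    using mean abs_triangle_ineq[of "vec_mean d z" "(vec_std d z - 1) * q"]
    by (simp add: theta_def q_def \<epsilon>_def algebra_simps)
  moreover have "gauss_tail q = real k / real d"
    unfolding q_def using k by (intro gauss_tail_std_gauss_quantile) auto
  ultimately have "\<bar>real (card {i \<in> {1..d}. theta d z k < z i}) - real k\<bar> \<le> real d * (\<epsilon> / 2 + r / sqrt 2)"
    using card_greater_deviation_le[of "{1..d}" "theta d z k" q \<epsilon> z "r / sqrt 2"] typical n
    by (simp add: typical_sample_def)
  also have "\<dots> \<le> real d * (4 * r * (1 + \<bar>q\<bar>))"
  proof -
    have "r / sqrt 2 = sqrt 2 * r / 2"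
      by (simp add: field_simps)
    then have "\<epsilon> / 2 + r / sqrt 2 = sqrt 2 * r + 4 * r * \<bar>q\<bar>"
      by (simp add: \<epsilon>_def field_simps)
    also have "\<dots> \<le> 4 * r * (1 + \<bar>q\<bar>)"
      using sqrt2_less_2 r by (simp add: algebra_simps)
    finally show ?thesis
      using n by simp
  qed
  finally show ?thesis
    using n by (simp add: divide_le_eq mult.commute)
qed

lemma real_card_filter_eq_sum:
  "finite I \<Longrightarrow> real (card {i \<in> I. P i}) = (\<Sum>i\<in>I. if P i then 1 else 0)"
  unfolding real_of_card by (rule sum.inter_filter)

lemma sum_indicator_eq_card_filter:
  "finite I \<Longrightarrow> (\<Sum>i\<in>I. indicator A (f i) :: real) = real (card {i \<in> I. f i \<in> A})"
  unfolding indicator_def of_bool_def by (rule real_card_filter_eq_sum[symmetric])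

lemma measure_typical_gauss_sample:
  fixes d :: nat and \<mu> \<sigma> r u v :: real
  assumes \<sigma>: "0 < \<sigma>" and r: "0 < r" "r \<le> 1"
  defines "M \<equiv> PiM {1..d} (\<lambda>_. gauss_measure \<mu> \<sigma>)"
  shows "1 - 6 * exp (- real d * r\<^sup>2) \<le> measure M {x \<in> space M. typical_sample d r u v (\<lambda>i. (x i - \<mu>) / \<sigma>)}"
proof -
  define \<beta> where "\<beta> = r / sqrt 2"
  txt \<open>A list, so that \<open>card J \<le> 6\<close> holds even if some of the events coincide.\<close>
  define J where "J = set [(\<lambda>y. y, sqrt 2 * r), (\<lambda>y. - y, sqrt 2 * r),
      (\<lambda>y. y\<^sup>2, 1 + 5 * r), (\<lambda>y. - y\<^sup>2, 3 * r - 1),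
      (indicator {u<..}, gauss_tail u + \<beta>), (indicator {..v}, 1 - gauss_tail v + \<beta>)]"
  have linear: "chernoff_bounded std_gauss (\<lambda>y. s * y) (sqrt 2 * r) (r\<^sup>2)" if "s\<^sup>2 = 1" for s
    using nn_integral_exp_linear_deviation_std_gauss[OF that, of "sqrt 2 * r"] r
    by (intro chernoff_boundedI[of _ _ "sqrt 2 * r"]) (simp_all add: power_mult_distrib)
  have indicator: "chernoff_bounded std_gauss (indicator A) (measure std_gauss A + \<beta>) (r\<^sup>2)"
    if "A \<in> sets borel" for A
    using nn_integral_exp_indicator_deviation[of std_gauss A \<beta>] that r
    by (intro chernoff_boundedI[of _ _ "4 * \<beta>"]) (simp_all add: prob_space_gauss_measure \<beta>_def power_divide)
  have upper: "chernoff_bounded std_gauss (\<lambda>y. y\<^sup>2) (1 + 5 * r) (r\<^sup>2)"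
    using nn_integral_exp_square_upper_std_gauss[OF r] r
    by (intro chernoff_boundedI[of _ _ "r / 4"]) simp_all
  have lower: "chernoff_bounded std_gauss (\<lambda>y. - y\<^sup>2) (3 * r - 1) (r\<^sup>2)"
    using nn_integral_exp_square_lower_std_gauss[OF r] r
    by (intro chernoff_boundedI[of _ _ "r / 2"]) (simp_all add: algebra_simps)
  have chernoff: "chernoff_bounded std_gauss g c (r\<^sup>2)" if "(g, c) \<in> J" for g c
    using that linear[of 1] linear[of "- 1"] upper lower
      indicator[of "{u<..}", folded gauss_tail_def] indicator[of "{..v}", unfolded cdf_std_gauss[unfolded cdf_def]]
    unfolding J_def by auto
  have "card J \<le> 6"
    unfolding J_def by (rule order.trans[OF card_length]) simp
  then have "1 - 6 * exp (- real d * r\<^sup>2) \<le> 1 - real (card J) * exp (- real (card {1..d}) * r\<^sup>2)"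
    by (simp add: mult_right_mono)
  also have "\<dots> \<le> measure M {x \<in> space M. \<forall>(g, c)\<in>J. (\<Sum>i\<in>{1..d}. g ((x i - \<mu>) / \<sigma>)) < real (card {1..d}) * c}"
    unfolding M_def using \<sigma> chernoff by (intro measure_gauss_sample_all_sums_less) (auto simp: J_def)
  also have "{x \<in> space M. \<forall>(g, c)\<in>J. (\<Sum>i\<in>{1..d}. g ((x i - \<mu>) / \<sigma>)) < real (card {1..d}) * c}
      = {x \<in> space M. typical_sample d r u v (\<lambda>i. (x i - \<mu>) / \<sigma>)}"
    unfolding J_def typical_sample_def \<beta>_def
    by (auto simp: sum_indicator_eq_card_filter sum_negf abs_less_iff algebra_simps)
  finally show ?thesis .
qed

lemma borel_measurable_card_greater_theta [measurable]:
  assumes [measurable_cong]: "sets G = sets borel"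
  shows "(\<lambda>x. real (card {i \<in> {1..d}. theta d x k < x i})) \<in> borel_measurable (PiM {1..d} (\<lambda>_. G))"
proof -
  have "(\<lambda>x. real (card {i \<in> {1..d}. theta d x k < x i})) = (\<lambda>x. \<Sum>i\<in>{1..d}. if theta d x k < x i then 1 else 0)"
    by (intro ext real_card_filter_eq_sum) simp
  also have "\<dots> \<in> borel_measurable (PiM {1..d} (\<lambda>_. G))"
    unfolding theta_def vec_std_def vec_mean_def by measurable
  finally show ?thesis .
qed

lemma card_greater_theta_concentration:
  fixes d k :: nat and \<mu> \<sigma> r :: real
  assumes d: "2 \<le> d" and \<sigma>: "0 < \<sigma>" and k: "0 < k" "k < d"
    and r: "0 < r" "r \<le> 1" "1 \<le> real d * r\<^sup>2"
  defines "M \<equiv> PiM {1..d} (\<lambda>_. gauss_measure \<mu> \<sigma>)"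
  shows "1 - 6 * exp (- real d * r\<^sup>2) \<le> measure M {x \<in> space M.
           \<bar>real (card {i \<in> {1..d}. x i > theta d x k}) - real k\<bar> / real d
             \<le> 4 * r * (1 + sqrt (- 2 * ln (min (real k / real d) (1 - real k / real d))))}"
    (is "_ \<le> measure M ?good")
proof -
  define q where "q = std_gauss_quantile (1 - real k / real d)"
  define \<epsilon> where "\<epsilon> = sqrt 2 * r + 8 * r * \<bar>q\<bar>"
  interpret M: prob_space M
    unfolding M_def using \<sigma> by (intro prob_space_PiM prob_space_gauss_measure)
  have "1 - 6 * exp (- real d * r\<^sup>2)
      \<le> measure M {x \<in> space M. typical_sample d r (q - \<epsilon>) (q + \<epsilon>) (\<lambda>i. (x i - \<mu>) / \<sigma>)}"
    unfolding M_def using \<sigma> r by (intro measure_typical_gauss_sample)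
  also have "\<dots> \<le> measure M ?good"
  proof (rule M.finite_measure_mono)
    show "?good \<in> sets M"
      unfolding M_def by measurable
    have "\<bar>q\<bar> \<le> sqrt (- 2 * ln (min (real k / real d) (1 - real k / real d)))"
      unfolding q_def using k by (intro abs_std_gauss_quantile_le) auto
    then have bound: "4 * r * (1 + \<bar>q\<bar>) \<le> 4 * r * (1 + sqrt (- 2 * ln (min (real k / real d) (1 - real k / real d))))"
      using r by (intro mult_left_mono) auto
    show "{x \<in> space M. typical_sample d r (q - \<epsilon>) (q + \<epsilon>) (\<lambda>i. (x i - \<mu>) / \<sigma>)} \<subseteq> ?good"
    proof (rule subsetI)
      fix x
      assume "x \<in> {x \<in> space M. typical_sample d r (q - \<epsilon>) (q + \<epsilon>) (\<lambda>i. (x i - \<mu>) / \<sigma>)}"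
      then have x: "x \<in> space M" and typical: "typical_sample d r (q - \<epsilon>) (q + \<epsilon>) (\<lambda>i. (x i - \<mu>) / \<sigma>)"
        by auto
      have "\<bar>real (card {i \<in> {1..d}. theta d (\<lambda>j. (x j - \<mu>) / \<sigma>) k < (x i - \<mu>) / \<sigma>}) - real k\<bar> / real d
          \<le> 4 * r * (1 + \<bar>q\<bar>)"
        using typical unfolding q_def \<epsilon>_def by (rule typical_sample_card_greater_theta[OF d k r])
      moreover have "{i \<in> {1..d}. x i > theta d x k}
          = {i \<in> {1..d}. theta d (\<lambda>j. (x j - \<mu>) / \<sigma>) k < (x i - \<mu>) / \<sigma>}"
        using d \<sigma> theta_less_standardize_iff[of d \<sigma> x k _ \<mu>] by auto
      ultimately show "x \<in> ?good"
        using x bound by simp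
    qed
  qed
  finally show ?thesis .
qed

theorem theorem1:
  fixes d k :: nat and \<mu> \<sigma> \<delta> :: real
  assumes "d \<ge> 2" and "\<sigma> > 0"
    and "1 \<le> k" and "k \<le> d - 1"
    and "0 < \<delta>" and "\<delta> < 1"
    and "real d \<ge> max 2 (ln (6 / \<delta>))"
  defines "M \<equiv> PiM {1..d} (\<lambda>_. gauss_measure \<mu> \<sigma>)"
  shows "measure M {x \<in> space M.
           \<bar>real (card {i \<in> {1..d}. x i > theta d x k}) - real k\<bar> / real d
             \<le> 4 * sqrt (ln (6 / \<delta>) / real d)
               * (1 + sqrt (- 2 * ln (min (real k / real d) (1 - real k / real d))))}
         \<ge> 1 - \<delta>"
proof -
  define L where "L = ln (6 / \<delta>)"
  have "\<delta> * exp 1 \<le> 1 * 3"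
    using assms(5,6) exp_le by (intro mult_mono) auto
  then have "exp 1 \<le> 6 / \<delta>"
    using assms(5) by (simp add: field_simps)
  then have L: "1 \<le> L" "L \<le> real d"
    using assms(5,7) by (simp_all add: L_def ln_ge_iff)
  have "real d * (sqrt (L / real d))\<^sup>2 = L"
    using assms(1) L by simp
  then have "1 - \<delta> = 1 - 6 * exp (- real d * (sqrt (L / real d))\<^sup>2)"
    using assms(5) by (simp add: L_def exp_minus)
  also have "\<dots> \<le> measure M {x \<in> space M.
           \<bar>real (card {i \<in> {1..d}. x i > theta d x k}) - real k\<bar> / real d
             \<le> 4 * sqrt (L / real d) * (1 + sqrt (- 2 * ln (min (real k / real d) (1 - real k / real d))))}"
    unfolding M_def using assms(1-4) L
    by (intro card_greater_theta_concentration) (auto simp: real_sqrt_le_1_iff)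
  finally show ?thesis
    by (simp add: L_def)
qed

end
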